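(* Consider the multicast coalitional game with player set $\mathcal{N}=\{1,\ldots,N\}$ and value function $$v(S)=\sum_{i\in S}U_i-\sum_{i\in S}\frac{\alpha_i}{R_S}-\frac{\beta+\gamma}{R_S},\qquad R_S=\min_{i\in S}R_i,$$ for nonempty $S\subseteq\mathcal{N}$. Suppose $R_i=R_0$ and $P_{Rx,i}=P_{Rx}$ for all $i\in\mathcal{N}$, so that $\alpha_i=\alpha:=aP_{Rx}X$ for all $i$. Let $$x_i=U_i-\frac{\alpha}{R_0}-\frac{\beta+\gamma}{NR_0},\qquad i\in\mathcal{N}.$$ Then the payoff profile $(x_1,\dots,x_N)$ lies in the core.
   Context: A transmitter multicasts a file of size $X>0$ bits to users $\mathcal{N}=\{1,\dots,N\}$. User $i$ has valuation $U_i\in\mathbb{R}$, downloads at rate $R_i>0$, and consumes receive power $P_{Rx,i}>0$; the transmitter transmits at power $P_{Tx}>0$. Costs per unit energy are $a>0$ at users and $b>0$ at the transmitter; bandwidth cost per second is $w>0$. Set $\alpha_i=aP_{Rx,i}X$, $\beta=bP_{Tx}X$, $\gamma=wX$. The core is the set of payoff vectors $(x_1,\dots,x_N)\in\mathbb{R}^N$ with $\sum_{i\in\mathcal{N}}x_i=v(\mathcal{N})$ and $\sum_{i\in S}x_i\ge v(S)$ for every nonempty $S\subseteq\mathcal{N}$. *)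

theory Defs
  imports Complex_Main
begin

definition R_S :: "(nat \<Rightarrow> real) \<Rightarrow> nat set \<Rightarrow> real" where
  "R_S R S = Min (R ` S)"

text \<open>Value of coalition S (for nonempty S):
  v(S) = sum U_i - sum alpha_i / R_S - (beta + gamma) / R_S.
  The empty coalition is not used by the core conditions; we set v({}) = 0.\<close>
definition mc_value ::
  "(nat \<Rightarrow> real) \<Rightarrow> (nat \<Rightarrow> real) \<Rightarrow> (nat \<Rightarrow> real) \<Rightarrow> real \<Rightarrow> real \<Rightarrow> nat set \<Rightarrow> real" where
  "mc_value U alpha R beta gamma S =
     (if S = {} then 0 else
      (\<Sum>i\<in>S. U i) - (\<Sum>i\<in>S. alpha i / R_S R S) - (beta + gamma) / R_S R S)"

definition in_core :: "nat set \<Rightarrow> (nat set \<Rightarrow> real) \<Rightarrow> (nat \<Rightarrow> real) \<Rightarrow> bool" where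
  "in_core Np v x \<longleftrightarrow>
     (\<Sum>i\<in>Np. x i) = v Np \<and>
     (\<forall>S. S \<subseteq> Np \<and> S \<noteq> {} \<longrightarrow> (\<Sum>i\<in>S. x i) \<ge> v S)"

end

theory Submission
  imports Defs
begin

text \<open>With identical rates and receive powers every coalition pays the same per-member
  energy cost, so v(S) is the sum of the net valuations u_i = U_i - alpha/R0 minus one common
  transmission cost K = (beta + gamma)/R0. Splitting K equally among all N players charges a
  coalition S only |S| K / N \<le> K, hence no coalition can improve on the equal split.\<close>

lemma in_core_equal_split_of_common_cost:
  fixes Np :: "nat set" and u :: "nat \<Rightarrow> real" and K :: real
  assumes "finite Np" "Np \<noteq> {}" "K \<ge> 0"
    and v_eq: "\<And>S. S \<subseteq> Np \<Longrightarrow> S \<noteq> {} \<Longrightarrow> v S = (\<Sum>i\<in>S. u i) - K"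
  shows "in_core Np v (\<lambda>i. u i - K / card Np)"
proof -
  have card_pos: "real (card Np) > 0"
    using assms(1,2) by (simp add: card_gt_0_iff)
  have share_sum: "(\<Sum>i\<in>S. u i - K / card Np) = (\<Sum>i\<in>S. u i) - card S * K / card Np" for S
    by (simp add: sum_subtractf)
  have "v S \<le> (\<Sum>i\<in>S. u i - K / card Np)" if "S \<subseteq> Np" "S \<noteq> {}" for S
  proof -
    have "real (card S) \<le> real (card Np)"
      using card_mono[OF assms(1) \<open>S \<subseteq> Np\<close>] by simp
    then have "card S * K \<le> card Np * K"
      using \<open>K \<ge> 0\<close> by (rule mult_right_mono)
    then have "card S * K / card Np \<le> K"
      using card_pos by (simp add: divide_le_eq mult.commute)
    then show ?thesis
      using v_eq[OF that] share_sum[of S] by simp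
  qed
  moreover have "(\<Sum>i\<in>Np. u i - K / card Np) = v Np"
    using v_eq[OF subset_refl assms(2)] share_sum[of Np] card_pos by simp
  ultimately show ?thesis
    unfolding in_core_def by auto
qed

lemma R_S_const:
  assumes "S \<noteq> {}" "\<And>i. i \<in> S \<Longrightarrow> R i = r"
  shows "R_S R S = r"
proof -
  have "R ` S = {r}" using assms by auto
  then show ?thesis unfolding R_S_def by simp
qed

lemma mc_value_uniform:
  assumes "S \<noteq> {}" "\<And>i. i \<in> S \<Longrightarrow> R i = r" "\<And>i. i \<in> S \<Longrightarrow> alpha i = \<alpha>"
  shows "mc_value U alpha R beta gamma S = (\<Sum>i\<in>S. U i - \<alpha> / r) - (beta + gamma) / r"
  using assms R_S_const[OF assms(1,2)] by (simp add: mc_value_def sum_subtractf)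

theorem proposition1:
  fixes N :: nat and U R P_Rx :: "nat \<Rightarrow> real"
    and R0 P_Rx0 P_Tx X a b w :: real
  assumes N_pos: "N \<ge> 1"
    and X_pos: "X > 0" and a_pos: "a > 0" and b_pos: "b > 0" and w_pos: "w > 0"
    and PTx_pos: "P_Tx > 0"
    and R_pos: "\<forall>i\<in>{1..N}. R i > 0"
    and PRx_pos: "\<forall>i\<in>{1..N}. P_Rx i > 0"
    and R_const: "\<forall>i\<in>{1..N}. R i = R0"
    and PRx_const: "\<forall>i\<in>{1..N}. P_Rx i = P_Rx0"
  shows "in_core {1..N}
           (mc_value U (\<lambda>i. a * P_Rx i * X) R (b * P_Tx * X) (w * X))
           (\<lambda>i. U i - (a * P_Rx0 * X) / R0 - (b * P_Tx * X + w * X) / (real N * R0))"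
proof -
  define K where "K = (b * P_Tx * X + w * X) / R0"
  have R0_pos: "R0 > 0" using R_pos R_const N_pos by force
  have "K \<ge> 0"
    unfolding K_def using R0_pos b_pos PTx_pos X_pos w_pos by simp
  moreover have "mc_value U (\<lambda>i. a * P_Rx i * X) R (b * P_Tx * X) (w * X) S
      = (\<Sum>i\<in>S. U i - a * P_Rx0 * X / R0) - K" if "S \<subseteq> {1..N}" "S \<noteq> {}" for S
    unfolding K_def using that R_const PRx_const by (intro mc_value_uniform) auto
  ultimately have "in_core {1..N} (mc_value U (\<lambda>i. a * P_Rx i * X) R (b * P_Tx * X) (w * X))
      (\<lambda>i. (U i - a * P_Rx0 * X / R0) - K / card {1..N})"
    using N_pos by (intro in_core_equal_split_of_common_cost) auto
  then show ?thesis
    by (simp add: K_def mult.commute)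
qed

end
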